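(* Let $N=\begin{pmatrix}0&1&0\\0&0&1\\0&0&0\end{pmatrix}$, $\xi=(x,y,z)^T$, and $d\ge1$. Then the set $W_d=\{\hat e_3\,p(x,y):p\in P^2_d\}$, $\hat e_3=(0,0,1)^T$, is a complement in $V^3_d$ to $\mathrm{rng}(\mathrm{ad}_N)\cap V^3_d$, i.e. $V^3_d=(\mathrm{rng}(\mathrm{ad}_N)\cap V^3_d)\oplus W_d$, where $\mathrm{rng}(\mathrm{ad}_N)$ is the image of $\mathrm{ad}_N$ on $F^3_d$.
   Context: $P^2_d$ is the space of real homogeneous polynomials of degree $d$ in $(x,y)$. $F^3_d$ is the space of vector fields on $\mathbb{R}^3$ with components real homogeneous polynomials of degree $d$ in $(x,y,z)$, and $V^3_d=\{v\in F^3_d:\nabla\cdot v=0\}$. $\mathrm{ad}_N h(\xi)=Dh(\xi)N\xi-Nh(\xi)$. *)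

theory Defs
  imports "HOL-Analysis.Analysis"
begin

text \<open>Coordinates of \<xi> = (x,y,z) in R^3 are \<xi>$1, \<xi>$2, \<xi>$3.\<close>

definition P2 :: "nat \<Rightarrow> (real \<Rightarrow> real \<Rightarrow> real) set" where
  "P2 d = {p. \<exists>c :: nat \<Rightarrow> real. \<forall>x y. p x y = (\<Sum>i\<le>d. c i * x ^ i * y ^ (d - i))}"

definition hom_poly3 :: "nat \<Rightarrow> (real^3 \<Rightarrow> real) \<Rightarrow> bool" where
  "hom_poly3 d p \<longleftrightarrow> (\<exists>c :: nat \<Rightarrow> nat \<Rightarrow> real. \<forall>\<xi>.
     p \<xi> = (\<Sum>i\<le>d. \<Sum>j\<le>d - i. c i j * (\<xi>$1) ^ i * (\<xi>$2) ^ j * (\<xi>$3) ^ (d - i - j)))"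

definition F3 :: "nat \<Rightarrow> (real^3 \<Rightarrow> real^3) set" where
  "F3 d = {v. \<forall>k. hom_poly3 d (\<lambda>\<xi>. v \<xi> $ k)}"

definition divergence :: "(real^3 \<Rightarrow> real^3) \<Rightarrow> real^3 \<Rightarrow> real" where
  "divergence v \<xi> = (\<Sum>k\<in>UNIV. deriv (\<lambda>t. v (\<xi> + t *\<^sub>R axis k 1) $ k) 0)"

definition V3 :: "nat \<Rightarrow> (real^3 \<Rightarrow> real^3) set" where
  "V3 d = {v \<in> F3 d. \<forall>\<xi>. divergence v \<xi> = 0}"

definition Nmat :: "real^3^3" where
  "Nmat = vector [vector [0, 1, 0], vector [0, 0, 1], vector [0, 0, 0]]"

definition adN :: "(real^3 \<Rightarrow> real^3) \<Rightarrow> real^3 \<Rightarrow> real^3" where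
  "adN h \<xi> = frechet_derivative h (at \<xi>) (Nmat *v \<xi>) - Nmat *v h \<xi>"

definition Wd :: "nat \<Rightarrow> (real^3 \<Rightarrow> real^3) set" where
  "Wd d = {(\<lambda>\<xi>. p (\<xi>$1) (\<xi>$2) *\<^sub>R axis 3 1) | p. p \<in> P2 d}"

end

theory Submission
  imports Defs "HOL-Library.Function_Algebras"
begin

text \<open>Identify a field with the coefficient arrays of its components and write
  \<open>L = y \<partial>\<^sub>x + z \<partial>\<^sub>y\<close> for the derivative along \<open>N\<xi>\<close>. Then
  \<open>ad\<^sub>N (h\<^sub>1, h\<^sub>2, h\<^sub>3) = (L h\<^sub>1 - h\<^sub>2, L h\<^sub>2 - h\<^sub>3, L h\<^sub>3)\<close>, so eliminating \<open>h\<^sub>2\<close> and \<open>h\<^sub>3\<close>,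
  a field \<open>(k\<^sub>1, k\<^sub>2, k\<^sub>3)\<close> differs from an element of the range by \<open>(0, 0, p)\<close> exactly when
  \<open>L\<^sup>2 k\<^sub>1 + L k\<^sub>2 + k\<^sub>3 - p = L\<^sup>3 f\<close> for some \<open>f\<close>.

  If the field is divergence free, \<open>u = L\<^sup>2 k\<^sub>1 + L k\<^sub>2 + k\<^sub>3\<close> satisfies \<open>\<partial>\<^sub>z u \<in> rng L\<close>, and every
  such \<open>u\<close> is \<open>L\<^sup>3 f\<close> plus a polynomial in \<open>x, y\<close> alone: by induction on the degree, since
  \<open>\<partial>\<^sub>x\<close> commutes with \<open>L\<close>, it suffices to treat \<open>x\<close>-free \<open>u\<close>, where \<open>L = z \<partial>\<^sub>y\<close> and the
  few remaining monomials \<open>y\<^sup>j z\<close>, \<open>y\<^sup>j z\<^sup>2\<close> are reached through the \<open>L\<close>-invariant \<open>y\<^sup>2 - 2xz\<close>.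

  Conversely \<open>L\<^sup>3 f\<close> is never a nonzero polynomial \<open>p\<close> in \<open>x, y\<close>: the operator
  \<open>\<Delta> = \<partial>\<^sub>y\<^sup>2 - 2 \<partial>\<^sub>x \<partial>\<^sub>z\<close> commutes with \<open>L\<close> and equals \<open>\<partial>\<^sub>y\<^sup>2\<close> on such \<open>p\<close>, so every Taylor
  coefficient of \<open>p\<close> at the origin is the value there of some \<open>\<partial>\<^sub>x\<^sup>a \<partial>\<^sub>y\<^sup>e \<Delta>\<^sup>k L\<^sup>3 f\<close>, \<open>e \<le> 1\<close>,
  an \<open>L\<close>-image, hence zero at the origin.\<close>

section \<open>Coefficient arrays and the derivative along \<open>N\<xi>\<close>\<close>

text \<open>\<open>k a b c\<close> is the coefficient of \<open>x\<^sup>a y\<^sup>b z\<^sup>c\<close>.\<close>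
type_synonym coeffs = "nat \<Rightarrow> nat \<Rightarrow> nat \<Rightarrow> real"

definition Dx :: "coeffs \<Rightarrow> coeffs" where "Dx k = (\<lambda>a b c. real (Suc a) * k (Suc a) b c)"

definition Dy :: "coeffs \<Rightarrow> coeffs" where "Dy k = (\<lambda>a b c. real (Suc b) * k a (Suc b) c)"

definition Dz :: "coeffs \<Rightarrow> coeffs" where "Dz k = (\<lambda>a b c. real (Suc c) * k a b (Suc c))"

definition mult_y :: "coeffs \<Rightarrow> coeffs" where "mult_y k = (\<lambda>a b c. if b = 0 then 0 else k a (b - 1) c)"

definition mult_z :: "coeffs \<Rightarrow> coeffs" where "mult_z k = (\<lambda>a b c. if c = 0 then 0 else k a b (c - 1))"

definition scale :: "real \<Rightarrow> coeffs \<Rightarrow> coeffs" where "scale r k = (\<lambda>a b c. r * k a b c)"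

definition monom :: "nat \<Rightarrow> nat \<Rightarrow> nat \<Rightarrow> coeffs" where
  "monom i j l = (\<lambda>a b c. if a = i \<and> b = j \<and> c = l then 1 else 0)"

definition int_x :: "coeffs \<Rightarrow> coeffs" where
  "int_x k = (\<lambda>a b c. if a = 0 then 0 else k (a - 1) b c / real a)"

definition div_z :: "coeffs \<Rightarrow> coeffs" where "div_z k = (\<lambda>a b c. k a b (Suc c))"

definition z_free_part :: "coeffs \<Rightarrow> coeffs" where
  "z_free_part k = (\<lambda>a b c. if c = 0 then k a b c else 0)"

definition x_free :: "coeffs \<Rightarrow> bool" where "x_free k \<longleftrightarrow> (\<forall>a b c. a \<noteq> 0 \<longrightarrow> k a b c = 0)"

definition z_free :: "coeffs \<Rightarrow> bool" where "z_free k \<longleftrightarrow> (\<forall>a b c. c \<noteq> 0 \<longrightarrow> k a b c = 0)"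

definition homog :: "nat \<Rightarrow> coeffs \<Rightarrow> bool" where
  "homog d k \<longleftrightarrow> (\<forall>a b c. k a b c \<noteq> 0 \<longrightarrow> a + b + c = d)"

text \<open>The derivative \<open>y \<partial>\<^sub>x + z \<partial>\<^sub>y\<close> along the linear field \<open>N\<xi> = (y, z, 0)\<close>.\<close>
definition LN :: "coeffs \<Rightarrow> coeffs" where "LN k = mult_y (Dx k) + mult_z (Dy k)"

abbreviation L3 :: "coeffs \<Rightarrow> coeffs" where "L3 k \<equiv> LN (LN (LN k))"

definition Delta :: "coeffs \<Rightarrow> coeffs" where "Delta k = Dy (Dy k) - 2 * Dx (Dz k)"

lemma LN_apply:
  "LN k a b c = (if b = 0 then 0 else real (Suc a) * k (Suc a) (b - 1) c)
              + (if c = 0 then 0 else real (Suc b) * k a (Suc b) (c - 1))"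
  by (simp add: LN_def mult_y_def mult_z_def Dx_def Dy_def)

lemma Delta_apply:
  "Delta k a b c = real (Suc b) * real (Suc (Suc b)) * k a (Suc (Suc b)) c
                 - 2 * (real (Suc a) * real (Suc c) * k (Suc a) b (Suc c))"
  by (simp add: Delta_def Dx_def Dy_def Dz_def)

lemma Dz_add: "Dz (k + m) = Dz k + Dz m"
  by (rule ext)+ (simp add: Dz_def algebra_simps)

lemma Dx_diff: "Dx (k - m) = Dx k - Dx m"
  by (rule ext)+ (simp add: Dx_def algebra_simps)

lemma Dz_diff: "Dz (k - m) = Dz k - Dz m"
  by (rule ext)+ (simp add: Dz_def algebra_simps)

lemma Dx_zero [simp]: "Dx 0 = 0"
  by (rule ext)+ (simp add: Dx_def)

lemma Dy_zero [simp]: "Dy 0 = 0"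
  by (rule ext)+ (simp add: Dy_def)

lemma mult_y_zero [simp]: "mult_y 0 = 0"
  by (rule ext)+ (simp add: mult_y_def)

lemma mult_z_zero [simp]: "mult_z 0 = 0"
  by (rule ext)+ (simp add: mult_z_def)

lemma scale_zero [simp]: "scale r 0 = 0"
  by (simp add: scale_def zero_fun_def)

lemma scale_by_zero [simp]: "scale 0 k = 0"
  by (simp add: scale_def zero_fun_def)

lemma LN_add: "LN (k + m) = LN k + LN m"
  by (rule ext)+ (simp add: LN_apply algebra_simps)

lemma LN_diff: "LN (k - m) = LN k - LN m"
  by (rule ext)+ (simp add: LN_apply algebra_simps)

lemma LN_scale: "LN (scale r k) = scale r (LN k)"
  by (rule ext)+ (simp add: LN_apply scale_def algebra_simps)

lemma LN_zero [simp]: "LN 0 = 0"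
  by (rule ext)+ (simp add: LN_apply)

lemma LN_at_origin: "LN k 0 0 0 = 0"
  by (simp add: LN_apply)

lemma Dx_LN: "Dx (LN k) = LN (Dx k)"
  by (rule ext)+ (simp add: Dx_def LN_apply algebra_simps)

lemma Dy_LN: "Dy (LN k) = LN (Dy k) + Dx k"
  by (rule ext)+ (auto simp add: Dx_def Dy_def LN_apply algebra_simps)

lemma Dz_LN: "Dz (LN k) = LN (Dz k) + Dy k"
  by (rule ext)+ (auto simp add: Dz_def Dy_def LN_apply algebra_simps)

lemma Delta_LN: "Delta (LN k) = LN (Delta k)"
  by (rule ext)+ (auto simp add: Delta_apply LN_apply algebra_simps)

lemma LN_mult_z: "LN (mult_z k) = mult_z (LN k)"
  by (rule ext)+ (auto simp add: mult_z_def LN_apply algebra_simps)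

lemma LN_mult_y: "LN (mult_y k) = mult_z k + mult_y (LN k)"
  by (rule ext)+ (auto simp add: mult_z_def mult_y_def LN_apply algebra_simps)

lemma Dx_int_x: "Dx (int_x k) = k"
  by (rule ext)+ (simp add: Dx_def int_x_def)

lemma Dz_Dx: "Dz (Dx k) = Dx (Dz k)"
  by (rule ext)+ (simp add: Dx_def Dz_def)

lemma Dy_L3: "Dy (L3 g) = LN (Dy (LN (LN g)) + Dx (LN g))"
  by (simp only: Dy_LN Dx_LN LN_add)

lemma Dz_L3: "Dz (L3 f) = LN (Dz (LN (LN f)) + Dy (LN f) + Dx f)"
  by (simp only: Dz_LN[of "LN (LN f)"] Dy_LN[of "LN f"] Dx_LN LN_add add.assoc)

lemma funpow_Dx_LN: "(Dx ^^ n) (LN k) = LN ((Dx ^^ n) k)"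
  by (induction n) (simp_all add: Dx_LN)

lemma funpow_Delta_LN: "(Delta ^^ n) (LN k) = LN ((Delta ^^ n) k)"
  by (induction n) (simp_all add: Delta_LN)

lemma funpow_Dx: "(Dx ^^ n) k = (\<lambda>a b c. pochhammer (real (Suc a)) n * k (a + n) b c)"
  by (induction n) (simp_all add: Dx_def pochhammer_rec algebra_simps)

lemma funpow_Dy: "(Dy ^^ n) k = (\<lambda>a b c. pochhammer (real (Suc b)) n * k a (b + n) c)"
  by (induction n) (simp_all add: Dy_def pochhammer_rec algebra_simps)

lemma funpow_Dx_Dy_at_origin: "(Dx ^^ a) ((Dy ^^ b) p) 0 0 0 = fact a * fact b * p a b 0"
  by (simp add: funpow_Dx funpow_Dy pochhammer_fact)

lemma z_free_Dy: "z_free p \<Longrightarrow> z_free (Dy p)"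
  by (simp add: z_free_def Dy_def)

lemma x_free_Dy: "x_free p \<Longrightarrow> x_free (Dy p)"
  by (simp add: x_free_def Dy_def)

lemma x_free_Dz: "x_free r \<Longrightarrow> x_free (Dz r)"
  by (simp add: x_free_def Dz_def)

lemma x_free_mult_z: "x_free k \<Longrightarrow> x_free (mult_z k)"
  by (simp add: x_free_def mult_z_def)

lemma x_free_monom: "x_free (monom 0 j l)"
  by (simp add: x_free_def monom_def)

lemma z_free_z_free_part: "z_free (z_free_part k)"
  by (simp add: z_free_def z_free_part_def)

lemma z_free_add: "z_free p \<Longrightarrow> z_free q \<Longrightarrow> z_free (p + q)"
  by (simp add: z_free_def)

lemma z_free_int_x: "z_free p \<Longrightarrow> z_free (int_x p)"
  by (simp add: z_free_def int_x_def)

lemma Dz_z_free: "z_free p \<Longrightarrow> Dz p = 0"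
  by (rule ext)+ (simp add: z_free_def Dz_def)

lemma x_free_if_Dx_eq_0:
  assumes "Dx r = 0"
  shows "x_free r"
  unfolding x_free_def
proof (intro allI impI)
  fix a b c :: nat
  assume "a \<noteq> 0"
  then obtain a' where a: "a = Suc a'" using not0_implies_Suc by blast
  have "Dx r a' b c = 0" using assms by simp
  then show "r a b c = 0" by (simp add: Dx_def a)
qed

lemma LN_x_free: "x_free g \<Longrightarrow> LN g = mult_z (Dy g)"
  by (rule ext)+ (simp add: x_free_def LN_apply mult_z_def Dy_def)

lemma L3_x_free:
  assumes "x_free g"
  shows "L3 g = (\<lambda>a b c. if 3 \<le> c
                    then real (b + 1) * real (b + 2) * real (b + 3) * g a (b + 3) (c - 3) else 0)"
    (is "_ = ?rhs")
proof -
  have "L3 g = mult_z (Dy (mult_z (Dy (mult_z (Dy g)))))"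
    using assms by (simp add: LN_x_free x_free_mult_z x_free_Dy)
  also have "\<dots> = ?rhs"
  proof (intro ext)
    fix a b c
    show "mult_z (Dy (mult_z (Dy (mult_z (Dy g))))) a b c = ?rhs a b c"
      by (cases "c \<le> 2") (auto simp: mult_z_def Dy_def numeral_3_eq_3 Suc_diff_Suc algebra_simps)
  qed
  finally show ?thesis .
qed

lemma homog_D: "homog d k \<Longrightarrow> k a b c \<noteq> 0 \<Longrightarrow> a + b + c = d"
  unfolding homog_def by blast

lemma homog_zero [simp]: "homog d 0"
  by (simp add: homog_def)

lemma homog_add: "homog d k \<Longrightarrow> homog d m \<Longrightarrow> homog d (k + m)"
  unfolding homog_def by (metis add.right_neutral plus_fun_apply)

lemma homog_diff: "homog d k \<Longrightarrow> homog d m \<Longrightarrow> homog d (k - m)"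
  unfolding homog_def by (metis diff_self diff_zero minus_apply)

lemma homog_scale: "homog d k \<Longrightarrow> homog d (scale r k)"
  by (simp add: homog_def scale_def)

lemma homog_monom: "homog (i + j + l) (monom i j l)"
  by (simp add: homog_def monom_def)

lemma homog_LN:
  assumes "homog d k"
  shows "homog d (LN k)"
  unfolding homog_def
proof (intro allI impI)
  fix a b c
  assume "LN k a b c \<noteq> 0"
  then have "b \<noteq> 0 \<and> k (Suc a) (b - 1) c \<noteq> 0 \<or> c \<noteq> 0 \<and> k a (Suc b) (c - 1) \<noteq> 0"
    by (auto simp: LN_apply split: if_splits)
  then show "a + b + c = d"
    using homog_D[OF assms, of "Suc a" "b - 1" c] homog_D[OF assms, of a "Suc b" "c - 1"] by auto
qed

lemma homog_Dx: "homog d k \<Longrightarrow> homog (d - 1) (Dx k)"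
  unfolding homog_def Dx_def by fastforce

lemma homog_Dy: "homog d k \<Longrightarrow> homog (d - 1) (Dy k)"
  unfolding homog_def Dy_def by fastforce

lemma homog_Dz: "homog d k \<Longrightarrow> homog (d - 1) (Dz k)"
  unfolding homog_def Dz_def by fastforce

lemma homog_div_z: "homog d k \<Longrightarrow> homog (d - 1) (div_z k)"
  unfolding homog_def div_z_def by fastforce

lemma homog_mult_y: "homog d k \<Longrightarrow> homog (Suc d) (mult_y k)"
  unfolding homog_def mult_y_def by (fastforce split: if_splits)

lemma homog_int_x: "homog d k \<Longrightarrow> homog (Suc d) (int_x k)"
  unfolding homog_def int_x_def by (fastforce split: if_splits)

lemma homog_z_free_part:
  assumes "homog d k"
  shows "homog d (z_free_part k)"
  unfolding homog_def
proof (intro allI impI)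
  fix a b c
  assume "z_free_part k a b c \<noteq> 0"
  then have "k a b c \<noteq> 0" by (simp add: z_free_part_def split: if_splits)
  then show "a + b + c = d" by (rule homog_D[OF assms])
qed

lemma homog_0_z_free: "homog 0 p \<Longrightarrow> z_free p"
  unfolding z_free_def using homog_D[of 0 p] by fastforce

section \<open>Cubes of \<open>LN\<close> free of \<open>z\<close> vanish\<close>

lemma Delta_eq_Dy_Dy: "x_free p \<or> z_free p \<Longrightarrow> Delta p = Dy (Dy p)"
  by (rule ext)+ (auto simp add: x_free_def z_free_def Delta_apply Dy_def)

lemma funpow_Delta_eq_funpow_Dy:
  assumes "x_free p \<or> z_free p"
  shows "(Delta ^^ n) p = (Dy ^^ (2 * n)) p"
proof -
  have free: "x_free ((Dy ^^ m) p) \<or> z_free ((Dy ^^ m) p)" for m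
    using assms by (induction m) (auto simp: x_free_Dy z_free_Dy)
  show ?thesis
    by (induction n) (simp_all add: Delta_eq_Dy_Dy[OF free])
qed

lemma z_free_L3_eq_zero:
  assumes "L3 f = p" "z_free p"
  shows "p = 0"
proof (intro ext)
  fix a b c
  show "p a b c = 0 a b c"
  proof (cases "c = 0")
    case False
    then show ?thesis using assms(2) by (simp add: z_free_def)
  next
    case True
    have "(Dx ^^ a) ((Dy ^^ (b mod 2)) ((Delta ^^ (b div 2)) p)) 0 0 0 = fact a * fact b * p a b 0"
    proof -
      have "(Dy ^^ (b mod 2)) ((Dy ^^ (2 * (b div 2))) p) = (Dy ^^ b) p"
        by (metis comp_apply funpow_add mod_mult_div_eq)
      then show ?thesis
        using funpow_Dx_Dy_at_origin[of a b p] assms(2) by (simp add: funpow_Delta_eq_funpow_Dy)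
    qed
    moreover obtain h where "(Dy ^^ (b mod 2)) ((Delta ^^ (b div 2)) p) = LN h"
    proof (cases "b mod 2 = 0")
      case True
      then show ?thesis using that unfolding assms(1)[symmetric] funpow_Delta_LN by simp
    next
      case False
      then have "b mod 2 = 1" by simp
      then show ?thesis using that unfolding assms(1)[symmetric] funpow_Delta_LN by (simp add: Dy_L3)
    qed
    ultimately show ?thesis using True by (simp add: funpow_Dx_LN LN_at_origin)
  qed
qed

section \<open>Cubes of \<open>LN\<close> modulo polynomials free of \<open>z\<close>\<close>

definition L3_image :: "nat \<Rightarrow> coeffs set" where
  "L3_image d = {L3 g | g. homog d g}"

lemma mem_L3_image_iff: "k \<in> L3_image d \<longleftrightarrow> (\<exists>g. homog d g \<and> L3 g = k)"
  unfolding L3_image_def by blast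

lemma L3_in_L3_image: "homog d g \<Longrightarrow> L3 g \<in> L3_image d"
  unfolding mem_L3_image_iff by blast

lemma zero_in_L3_image [simp]: "0 \<in> L3_image d"
  using L3_in_L3_image[OF homog_zero] by simp

lemma L3_image_add: "k \<in> L3_image d \<Longrightarrow> m \<in> L3_image d \<Longrightarrow> k + m \<in> L3_image d"
  unfolding L3_image_def by (auto simp flip: LN_add intro: homog_add)

lemma L3_image_scale: "k \<in> L3_image d \<Longrightarrow> scale r k \<in> L3_image d"
  unfolding L3_image_def by (auto simp flip: LN_scale intro: homog_scale)

lemma in_L3_image_if_L3_eq_scale:
  assumes "L3 g = scale K k" "homog d g" "K \<noteq> 0"
  shows "k \<in> L3_image d"
proof -
  have "scale (1 / K) (L3 g) \<in> L3_image d"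
    by (intro L3_image_scale L3_in_L3_image assms(2))
  then show ?thesis using assms(1,3) by (simp add: scale_def)
qed

text \<open>The coefficients of \<open>(y\<^sup>2 - 2xz)\<^sup>n\<close>.\<close>
definition Q :: "nat \<Rightarrow> coeffs" where
  "Q n = (\<lambda>a b c. if a = c \<and> b + 2 * a = 2 * n then (-2) ^ a * real (n choose a) else 0)"

lemma LN_Q: "LN (Q n) = 0"
proof (intro ext)
  fix a b c
  show "LN (Q n) a b c = 0 a b c"
  proof (cases "b \<noteq> 0 \<and> c = Suc a \<and> b + 2 * a + 1 = 2 * n")
    case True
    then obtain b' where b: "b = Suc b'" by (cases b) auto
    have "real (Suc b) = 2 * real (n - a)" using True b by simp
    moreover have "real (Suc a) * real (n choose Suc a) = real (n - a) * real (n choose a)"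
      by (metis binomial_absorb_comp binomial_absorption of_nat_mult)
    moreover have "LN (Q n) a b c = (-2) ^ a * (- 2 * (real (Suc a) * real (n choose Suc a))
                                              + real (Suc b) * real (n choose a))"
      using True b by (simp add: LN_apply Q_def algebra_simps)
    ultimately show ?thesis by simp
  next
    case False
    then show ?thesis
      by (cases b; cases c) (auto simp add: LN_apply Q_def; presburger)+
  qed
qed

lemma homog_Q: "homog (2 * n) (Q n)"
  by (auto simp: homog_def Q_def split: if_splits)

lemma L3_Q: "L3 (Q n) = 0"
  by (simp add: LN_Q)

lemma L3_y_Q: "L3 (mult_y (Q n)) = 0"
  by (simp add: LN_Q LN_mult_y LN_mult_z)

lemma L3_y2_Q: "L3 (mult_y (mult_y (Q n))) = 0"
  by (simp only: LN_Q LN_mult_y LN_mult_z LN_add LN_zero mult_y_zero mult_z_zero add_0 add_0_right)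

lemma L3_y_power:
  "L3 (monom 0 (n + 3) 0) = scale (real (n + 1) * real (n + 2) * real (n + 3)) (monom 0 n 3)"
  unfolding L3_x_free[OF x_free_monom] by (rule ext)+ (auto simp: monom_def scale_def)

lemma LN_vanishing_at_z0: "(\<And>a b. N a b 0 = 0) \<Longrightarrow> LN N a b 0 = 0"
  by (simp add: LN_apply)

lemma LN_div_z: "(\<And>a b. N a b 0 = 0) \<Longrightarrow> LN (div_z N) = div_z (LN N)"
  by (rule ext)+ (auto simp: LN_apply div_z_def)

lemma L3_div_z: "(\<And>a b. N a b 0 = 0) \<Longrightarrow> L3 (div_z N) = div_z (L3 N)"
  by (simp add: LN_div_z LN_vanishing_at_z0)

lemma div_z_scale_monom: "0 < l \<Longrightarrow> div_z (scale r (monom i j l)) = scale r (monom i j (l - 1))"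
  by (rule ext)+ (auto simp: div_z_def scale_def monom_def)

text \<open>\<open>y\<^sup>D\<^sup>+\<^sup>1\<close> minus the \<open>LN\<close>-invariant \<open>(y\<^sup>2 - 2xz)\<^sup>(\<^sup>D\<^sup>+\<^sup>1\<^sup>)\<^sup>/\<^sup>2\<close>, resp.
  \<open>y (y\<^sup>2 - 2xz)\<^sup>D\<^sup>/\<^sup>2\<close>, is divisible by \<open>z\<close> and has the same image under \<open>L3\<close>.\<close>
lemma monom_z2_in_L3_image:
  assumes "2 \<le> D"
  shows "monom 0 (D - 2) 2 \<in> L3_image D"
proof -
  define n where "n = D - 2"
  have D: "D = n + 2" using assms by (simp add: n_def)
  define K where "K = real (n + 1) * real (n + 2) * real (n + 3)"
  define N where "N = monom 0 (D + 1) 0 - (if even D then mult_y (Q (D div 2)) else Q ((D + 1) div 2))"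
  have homog_N: "homog (D + 1) N"
    unfolding N_def using homog_monom[of 0 "D + 1" 0] homog_Q[of "(D + 1) div 2"]
      homog_mult_y[OF homog_Q[of "D div 2"]]
    by (auto intro!: homog_diff)
  have N_z0: "N a b 0 = 0" for a b
    by (auto simp: N_def monom_def Q_def mult_y_def)
  have "L3 N = L3 (monom 0 (n + 3) 0)"
    by (simp add: N_def D LN_diff L3_Q L3_y_Q numeral_3_eq_3)
  also have "\<dots> = scale K (monom 0 n 3)"
    unfolding L3_y_power K_def ..
  finally have "L3 (div_z N) = scale K (monom 0 (D - 2) 2)"
    by (simp add: L3_div_z[of N, OF N_z0] D div_z_scale_monom)
  moreover have "homog D (div_z N)"
    using homog_div_z[OF homog_N] by simp
  ultimately show ?thesis
    by (rule in_L3_image_if_L3_eq_scale) (simp add: K_def)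
qed

text \<open>Here \<open>y\<^sup>2\<^sup>n\<^sup>+\<^sup>2 + n (y\<^sup>2 - 2xz)\<^sup>n\<^sup>+\<^sup>1 - (n + 1) y\<^sup>2 (y\<^sup>2 - 2xz)\<^sup>n\<close> is divisible by \<open>z\<^sup>2\<close>
  and has the same image under \<open>L3\<close> as \<open>y\<^sup>2\<^sup>n\<^sup>+\<^sup>2\<close>.\<close>
lemma monom_z1_in_L3_image:
  assumes "even D" "2 \<le> D"
  shows "monom 0 (D - 1) 1 \<in> L3_image D"
proof -
  define n where "n = D div 2"
  have D: "D = 2 * n" and n: "1 \<le> n" using assms by (auto simp: n_def)
  define K where "K = real (2 * n) * real (2 * n + 1) * real (2 * n + 2)"
  define N where "N = monom 0 (2 * n + 2) 0 + scale (real n) (Q (Suc n))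
                      - scale (real (Suc n)) (mult_y (mult_y (Q n)))"
  have homog_N: "homog (D + 2) N"
  proof -
    have "homog (D + 2) (monom 0 (2 * n + 2) 0)"
      using homog_monom[of 0 "2 * n + 2" 0] by (simp add: D)
    moreover have "homog (D + 2) (Q (Suc n))"
      using homog_Q[of "Suc n"] by (simp add: D)
    moreover have "homog (D + 2) (mult_y (mult_y (Q n)))"
      using homog_mult_y[OF homog_mult_y[OF homog_Q[of n]]] by (simp add: D)
    ultimately show ?thesis
      unfolding N_def by (intro homog_diff homog_add homog_scale)
  qed
  have N_z0: "N a b 0 = 0" for a b
    by (cases "a = 0 \<and> b = 2 * n + 2") (auto simp: N_def monom_def Q_def mult_y_def scale_def)
  have N_z1: "div_z N a b 0 = 0" for a b
    using n by (cases "a = 1 \<and> b = 2 * n") (auto simp: N_def monom_def Q_def mult_y_def scale_def div_z_def algebra_simps)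
  have "L3 N = L3 (monom 0 ((2 * n - 1) + 3) 0)"
    using n unfolding N_def LN_add LN_diff LN_scale L3_Q L3_y2_Q by simp
  also have "\<dots> = scale K (monom 0 (2 * n - 1) 3)"
    unfolding L3_y_power K_def using n by simp
  finally have "L3 (div_z (div_z N)) = scale K (monom 0 (D - 1) 1)"
    by (simp add: L3_div_z[of "div_z N", OF N_z1] L3_div_z[of N, OF N_z0] D div_z_scale_monom)
  moreover have "homog D (div_z (div_z N))"
    using homog_div_z[OF homog_div_z[OF homog_N]] by simp
  ultimately show ?thesis
    by (rule in_L3_image_if_L3_eq_scale) (use n in \<open>simp add: K_def\<close>)
qed

lemma x_free_Dz_eq_LN_coeff:
  assumes "x_free r" "Dz r = LN w"
  shows "r 0 (2 * k) 1 = 0"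
proof -
  have "(Delta ^^ k) (Dz r) 0 0 0 = 0"
    unfolding assms(2) funpow_Delta_LN by (rule LN_at_origin)
  moreover have "(Delta ^^ k) (Dz r) 0 0 0 = fact (2 * k) * r 0 (2 * k) 1"
    using funpow_Dx_Dy_at_origin[of 0 "2 * k" "Dz r"] x_free_Dz[OF assms(1)]
    by (simp add: funpow_Delta_eq_funpow_Dy Dz_def)
  ultimately show ?thesis by simp
qed

lemma x_free_z_cube_multiple_in_L3_image:
  assumes "x_free r" "homog D r"
  shows "(\<lambda>a b c. if 3 \<le> c then r a b c else 0) \<in> L3_image D"
proof -
  txt \<open>On \<open>x\<close>-free arrays \<open>LN\<close> is \<open>z \<partial>\<^sub>y\<close> (\<open>LN_x_free\<close>): divide by \<open>z\<^sup>3\<close> and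
    integrate three times in \<open>y\<close>.\<close>
  define g :: coeffs where "g = (\<lambda>a b c. if a = 0 \<and> 3 \<le> b
    then r 0 (b - 3) (c + 3) / (real b * real (b - 1) * real (b - 2)) else 0)"
  have "homog D g"
    unfolding homog_def g_def using homog_D[OF assms(2), of 0 _ "_ + 3"]
    by (fastforce split: if_splits)
  moreover have "L3 g = (\<lambda>a b c. if 3 \<le> c then r a b c else 0)"
  proof (intro ext)
    fix a b c
    have "g a (b + 3) (c - 3) = r a b c / (real (b + 1) * real (b + 2) * real (b + 3))" if "3 \<le> c"
      using that assms(1) by (auto simp: g_def x_free_def mult_ac)
    then have "real (b + 1) * real (b + 2) * real (b + 3) * g a (b + 3) (c - 3) = r a b c" if "3 \<le> c"
      using that by (simp del: of_nat_add)
    then show "L3 g a b c = (if 3 \<le> c then r a b c else 0)"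
      by (simp add: L3_x_free x_free_def g_def)
  qed
  ultimately show ?thesis
    by (metis L3_in_L3_image)
qed

lemma x_free_homog_split:
  assumes "x_free r" "homog D r"
  shows "r - z_free_part r
       = (\<lambda>a b c. if 3 \<le> c then r a b c else 0)
         + scale (r 0 (D - 2) 2) (monom 0 (D - 2) 2) + scale (r 0 (D - 1) 1) (monom 0 (D - 1) 1)"
    (is "_ = ?rhs")
proof (intro ext)
  fix a b c :: nat
  have r_zero: "r i j l = 0" if "i \<noteq> 0 \<or> i + j + l \<noteq> D" for i j l
    using that assms homog_D unfolding x_free_def by blast
  consider "c = 0" | "c = 1" | "c = 2" | "3 \<le> c" by linarith
  then show "(r - z_free_part r) a b c = ?rhs a b c"
  proof cases
    case 2
    then show ?thesis
      by (cases "a = 0 \<and> b = D - 1") (auto simp: z_free_part_def scale_def monom_def intro!: r_zero)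
  next
    case 3
    then show ?thesis
      by (cases "a = 0 \<and> b = D - 2") (auto simp: z_free_part_def scale_def monom_def intro!: r_zero)
  qed (auto simp: z_free_part_def scale_def monom_def intro!: r_zero)
qed

lemma L3_decomposition_x_free:
  assumes "x_free r" "homog D r" "Dz r = LN w"
  shows "r - z_free_part r \<in> L3_image D"
proof -
  have "scale (r 0 (D - 2) 2) (monom 0 (D - 2) 2) \<in> L3_image D"
  proof (cases "r 0 (D - 2) 2 = 0")
    case False
    then have "2 \<le> D" using homog_D[OF assms(2)] by fastforce
    then show ?thesis by (intro L3_image_scale monom_z2_in_L3_image)
  qed simp
  moreover have "scale (r 0 (D - 1) 1) (monom 0 (D - 1) 1) \<in> L3_image D"
  proof (cases "r 0 (D - 1) 1 = 0")
    case False
    then have "1 \<le> D" using homog_D[OF assms(2)] by fastforce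
    have "r 0 (2 * ((D - 1) div 2)) 1 = 0"
      by (rule x_free_Dz_eq_LN_coeff[OF assms(1,3)])
    with False have "2 * ((D - 1) div 2) \<noteq> D - 1"
      by auto
    with \<open>1 \<le> D\<close> have "even D"
      by presburger
    with \<open>1 \<le> D\<close> show ?thesis
      by (intro L3_image_scale monom_z1_in_L3_image) auto
  qed simp
  ultimately show ?thesis
    unfolding x_free_homog_split[OF assms(1,2)]
    by (intro L3_image_add x_free_z_cube_multiple_in_L3_image assms(1,2))
qed

lemma L3_decomposition:
  assumes "homog d u" "Dz u \<in> range LN"
  shows "\<exists>p. homog d p \<and> z_free p \<and> u - p \<in> L3_image d"
  using assms
proof (induction d arbitrary: u)
  case 0
  then show ?case using homog_0_z_free by (intro exI[of _ u]) (simp flip: zero_fun_def)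
next
  case (Suc d)
  obtain w where w: "Dz u = LN w" using Suc.prems(2) by blast
  have "homog d (Dx u)" using homog_Dx[OF Suc.prems(1)] by simp
  moreover have "Dz (Dx u) \<in> range LN" by (simp add: Dz_Dx w Dx_LN)
  ultimately obtain p' where p': "homog d p'" "z_free p'" "Dx u - p' \<in> L3_image d"
    using Suc.IH by blast
  then obtain f' where f': "homog d f'" "L3 f' = Dx u - p'"
    unfolding mem_L3_image_iff by blast
  define F where "F = int_x f'"
  define P where "P = int_x p'"
  define r where "r = u - L3 F - P"
  have homog_r: "homog (Suc d) r"
    unfolding r_def F_def P_def
    by (intro homog_diff homog_LN homog_int_x Suc.prems(1) f'(1) p'(1))
  have "Dx r = 0"
    unfolding r_def F_def P_def by (simp add: Dx_diff Dx_LN Dx_int_x f'(2))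
  then have "x_free r" by (rule x_free_if_Dx_eq_0)
  moreover have "Dz r = LN (w - (Dz (LN (LN F)) + Dy (LN F) + Dx F))"
    unfolding r_def P_def by (simp add: Dz_diff w Dz_L3 Dz_z_free z_free_int_x p'(2) LN_diff)
  ultimately have "r - z_free_part r \<in> L3_image (Suc d)"
    using L3_decomposition_x_free homog_r by blast
  moreover have "L3 F \<in> L3_image (Suc d)"
    unfolding F_def by (intro L3_in_L3_image homog_int_x f'(1))
  ultimately have "L3 F + (r - z_free_part r) \<in> L3_image (Suc d)"
    by (rule L3_image_add[rotated])
  moreover have "L3 F + (r - z_free_part r) = u - (P + z_free_part r)"
    unfolding r_def by (simp add: algebra_simps)
  ultimately have "u - (P + z_free_part r) \<in> L3_image (Suc d)"
    by simp
  moreover have "homog (Suc d) (P + z_free_part r)"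
    unfolding P_def by (intro homog_add homog_int_x p'(1) homog_z_free_part homog_r)
  moreover have "z_free (P + z_free_part r)"
    unfolding P_def by (intro z_free_add z_free_int_x p'(2) z_free_z_free_part)
  ultimately show ?case by blast
qed

section \<open>Polynomial functions on \<open>\<real>\<^sup>3\<close>\<close>

definition poly3 :: "nat \<Rightarrow> coeffs \<Rightarrow> real^3 \<Rightarrow> real" where
  "poly3 n k \<xi> = (\<Sum>a\<le>n. \<Sum>b\<le>n. \<Sum>c\<le>n. k a b c * ((\<xi>$1) ^ a * (\<xi>$2) ^ b * (\<xi>$3) ^ c))"

definition poly3_deriv :: "nat \<Rightarrow> coeffs \<Rightarrow> real^3 \<Rightarrow> real^3 \<Rightarrow> real" where
  "poly3_deriv n k \<xi> v = v$1 * poly3 n (Dx k) \<xi> + v$2 * poly3 n (Dy k) \<xi> + v$3 * poly3 n (Dz k) \<xi>"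

lemma poly3_add: "poly3 n (k + m) \<xi> = poly3 n k \<xi> + poly3 n m \<xi>"
  by (simp add: poly3_def algebra_simps sum.distrib)

lemma poly3_diff: "poly3 n (k - m) \<xi> = poly3 n k \<xi> - poly3 n m \<xi>"
  by (simp add: poly3_def algebra_simps sum_subtractf)

lemma poly3_zero [simp]: "poly3 n 0 \<xi> = 0"
  by (simp add: poly3_def)

lemma homog_outside:
  assumes "homog n k"
  shows "k (Suc n) b c = 0" "k a (Suc n) c = 0" "k a b (Suc n) = 0"
  using homog_D[OF assms] by fastforce+

lemma sum_atMost_derivative_shift:
  fixes g :: "nat \<Rightarrow> real"
  assumes "g (Suc n) = 0"
  shows "(\<Sum>a\<le>n. real a * g a * x ^ (a - 1)) = (\<Sum>a\<le>n. real (Suc a) * g (Suc a) * x ^ a)"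
proof -
  let ?h = "\<lambda>a. real a * g a * x ^ (a - 1)"
  have "(\<Sum>a\<le>Suc n. ?h a) = ?h 0 + (\<Sum>a\<le>n. ?h (Suc a))" by (rule sum.atMost_Suc_shift)
  then show ?thesis using assms by simp
qed

lemma sum_atMost_mult_shift:
  fixes g :: "nat \<Rightarrow> real"
  assumes "g n = 0"
  shows "x * (\<Sum>b\<le>n. g b * x ^ b) = (\<Sum>b\<le>n. (if b = 0 then 0 else g (b - 1)) * x ^ b)"
proof (cases n)
  case (Suc m)
  let ?h = "\<lambda>b. (if b = 0 then 0 else g (b - 1)) * x ^ b"
  have "(\<Sum>b\<le>Suc m. ?h b) = ?h 0 + (\<Sum>b\<le>m. ?h (Suc b))" by (rule sum.atMost_Suc_shift)
  also have "\<dots> = x * (\<Sum>b\<le>m. g b * x ^ b)" by (simp add: sum_distrib_left algebra_simps)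
  also have "\<dots> = x * (\<Sum>b\<le>Suc m. g b * x ^ b)" using assms Suc by simp
  finally show ?thesis using Suc by simp
qed (use assms in simp)

lemma poly3_Dx:
  assumes "homog n k"
  shows "(\<Sum>a\<le>n. \<Sum>b\<le>n. \<Sum>c\<le>n. k a b c * (real a * (\<xi>$1) ^ (a - 1) * (\<xi>$2) ^ b * (\<xi>$3) ^ c))
       = poly3 n (Dx k) \<xi>"
proof -
  define g where "g a = (\<Sum>b\<le>n. \<Sum>c\<le>n. k a b c * ((\<xi>$2) ^ b * (\<xi>$3) ^ c))" for a
  have "(\<Sum>a\<le>n. \<Sum>b\<le>n. \<Sum>c\<le>n. k a b c * (real a * (\<xi>$1) ^ (a - 1) * (\<xi>$2) ^ b * (\<xi>$3) ^ c))
      = (\<Sum>a\<le>n. real a * g a * (\<xi>$1) ^ (a - 1))"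
    unfolding g_def by (simp add: sum_distrib_left sum_distrib_right mult_ac)
  also have "\<dots> = (\<Sum>a\<le>n. real (Suc a) * g (Suc a) * (\<xi>$1) ^ a)"
    by (rule sum_atMost_derivative_shift) (simp add: g_def homog_outside[OF assms])
  also have "\<dots> = poly3 n (Dx k) \<xi>"
    unfolding g_def poly3_def Dx_def by (simp add: sum_distrib_left sum_distrib_right mult_ac)
  finally show ?thesis .
qed

lemma poly3_Dy:
  assumes "homog n k"
  shows "(\<Sum>a\<le>n. \<Sum>b\<le>n. \<Sum>c\<le>n. k a b c * (real b * (\<xi>$1) ^ a * (\<xi>$2) ^ (b - 1) * (\<xi>$3) ^ c))
       = poly3 n (Dy k) \<xi>"
proof -
  define g where "g a b = (\<Sum>c\<le>n. k a b c * (\<xi>$3) ^ c)" for a b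
  have "(\<Sum>a\<le>n. \<Sum>b\<le>n. \<Sum>c\<le>n. k a b c * (real b * (\<xi>$1) ^ a * (\<xi>$2) ^ (b - 1) * (\<xi>$3) ^ c))
      = (\<Sum>a\<le>n. (\<xi>$1) ^ a * (\<Sum>b\<le>n. real b * g a b * (\<xi>$2) ^ (b - 1)))"
    unfolding g_def by (simp add: sum_distrib_left sum_distrib_right mult_ac)
  also have "\<dots> = (\<Sum>a\<le>n. (\<xi>$1) ^ a * (\<Sum>b\<le>n. real (Suc b) * g a (Suc b) * (\<xi>$2) ^ b))"
    by (intro sum.cong refl arg_cong2[where f = "(*)"] sum_atMost_derivative_shift)
      (simp add: g_def homog_outside[OF assms])
  also have "\<dots> = poly3 n (Dy k) \<xi>"
    unfolding g_def poly3_def Dy_def by (simp add: sum_distrib_left sum_distrib_right mult_ac)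
  finally show ?thesis .
qed

lemma poly3_Dz:
  assumes "homog n k"
  shows "(\<Sum>a\<le>n. \<Sum>b\<le>n. \<Sum>c\<le>n. k a b c * (real c * (\<xi>$1) ^ a * (\<xi>$2) ^ b * (\<xi>$3) ^ (c - 1)))
       = poly3 n (Dz k) \<xi>"
proof -
  have "(\<Sum>a\<le>n. \<Sum>b\<le>n. \<Sum>c\<le>n. k a b c * (real c * (\<xi>$1) ^ a * (\<xi>$2) ^ b * (\<xi>$3) ^ (c - 1)))
      = (\<Sum>a\<le>n. \<Sum>b\<le>n. (\<xi>$1) ^ a * (\<xi>$2) ^ b * (\<Sum>c\<le>n. real c * k a b c * (\<xi>$3) ^ (c - 1)))"
    by (simp add: sum_distrib_left sum_distrib_right mult_ac)
  also have "\<dots> = (\<Sum>a\<le>n. \<Sum>b\<le>n. (\<xi>$1) ^ a * (\<xi>$2) ^ b * (\<Sum>c\<le>n. real (Suc c) * k a b (Suc c) * (\<xi>$3) ^ c))"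
    by (intro sum.cong refl arg_cong2[where f = "(*)"] sum_atMost_derivative_shift)
      (simp add: homog_outside[OF assms])
  also have "\<dots> = poly3 n (Dz k) \<xi>"
    unfolding poly3_def Dz_def by (simp add: sum_distrib_left sum_distrib_right mult_ac)
  finally show ?thesis .
qed

lemma monomial_has_derivative:
  "((\<lambda>\<xi>::real^3. (\<xi>$1) ^ a * (\<xi>$2) ^ b * (\<xi>$3) ^ c) has_derivative
    (\<lambda>v. v$1 * (real a * (\<xi>$1) ^ (a - 1) * (\<xi>$2) ^ b * (\<xi>$3) ^ c)
        + v$2 * (real b * (\<xi>$1) ^ a * (\<xi>$2) ^ (b - 1) * (\<xi>$3) ^ c)
        + v$3 * (real c * (\<xi>$1) ^ a * (\<xi>$2) ^ b * (\<xi>$3) ^ (c - 1)))) (at \<xi>)"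
  by (auto intro!: derivative_eq_intros bounded_linear_imp_has_derivative bounded_linear_vec_nth
        simp: algebra_simps)

lemma poly3_has_derivative:
  assumes "homog n k"
  shows "(poly3 n k has_derivative poly3_deriv n k \<xi>) (at \<xi>)"
proof -
  have "((\<lambda>\<xi>. \<Sum>a\<le>n. \<Sum>b\<le>n. \<Sum>c\<le>n. k a b c * ((\<xi>$1) ^ a * (\<xi>$2) ^ b * (\<xi>$3) ^ c)) has_derivative
     (\<lambda>v. \<Sum>a\<le>n. \<Sum>b\<le>n. \<Sum>c\<le>n. k a b c * (v$1 * (real a * (\<xi>$1) ^ (a - 1) * (\<xi>$2) ^ b * (\<xi>$3) ^ c)
        + v$2 * (real b * (\<xi>$1) ^ a * (\<xi>$2) ^ (b - 1) * (\<xi>$3) ^ c)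
        + v$3 * (real c * (\<xi>$1) ^ a * (\<xi>$2) ^ b * (\<xi>$3) ^ (c - 1))))) (at \<xi>)"
    by (intro has_derivative_sum has_derivative_mult_right monomial_has_derivative)
  moreover have "(\<Sum>a\<le>n. \<Sum>b\<le>n. \<Sum>c\<le>n. k a b c * (v$1 * (real a * (\<xi>$1) ^ (a - 1) * (\<xi>$2) ^ b * (\<xi>$3) ^ c)
        + v$2 * (real b * (\<xi>$1) ^ a * (\<xi>$2) ^ (b - 1) * (\<xi>$3) ^ c)
        + v$3 * (real c * (\<xi>$1) ^ a * (\<xi>$2) ^ b * (\<xi>$3) ^ (c - 1))))
     = poly3_deriv n k \<xi> v" for v :: "real^3"
    unfolding poly3_deriv_def poly3_Dx[OF assms, symmetric] poly3_Dy[OF assms, symmetric]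
      poly3_Dz[OF assms, symmetric]
    by (simp add: sum.distrib sum_distrib_left algebra_simps)
  ultimately show ?thesis
    unfolding poly3_def[abs_def] by (rule has_derivative_eq_rhs[OF _ ext])
qed

lemma poly3_mult_y:
  assumes "\<And>a c. k a n c = 0"
  shows "poly3 n (mult_y k) \<xi> = \<xi>$2 * poly3 n k \<xi>"
proof -
  define g where "g a b = (\<Sum>c\<le>n. k a b c * ((\<xi>$1) ^ a * (\<xi>$3) ^ c))" for a b
  have "\<xi>$2 * poly3 n k \<xi> = (\<Sum>a\<le>n. \<xi>$2 * (\<Sum>b\<le>n. g a b * (\<xi>$2) ^ b))"
    unfolding poly3_def g_def by (simp add: sum_distrib_left sum_distrib_right mult_ac)
  also have "\<dots> = (\<Sum>a\<le>n. (\<Sum>b\<le>n. (if b = 0 then 0 else g a (b - 1)) * (\<xi>$2) ^ b))"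
    by (intro sum.cong refl sum_atMost_mult_shift) (simp add: g_def assms)
  also have "\<dots> = poly3 n (mult_y k) \<xi>"
    unfolding poly3_def g_def mult_y_def
    by (intro sum.cong refl) (simp add: sum_distrib_left sum_distrib_right mult_ac)
  finally show ?thesis by simp
qed

lemma poly3_mult_z:
  assumes "\<And>a b. k a b n = 0"
  shows "poly3 n (mult_z k) \<xi> = \<xi>$3 * poly3 n k \<xi>"
proof -
  have "\<xi>$3 * poly3 n k \<xi>
      = (\<Sum>a\<le>n. \<Sum>b\<le>n. (\<xi>$1) ^ a * (\<xi>$2) ^ b * (\<xi>$3 * (\<Sum>c\<le>n. k a b c * (\<xi>$3) ^ c)))"
    unfolding poly3_def by (simp add: sum_distrib_left sum_distrib_right mult_ac)
  also have "\<dots> = (\<Sum>a\<le>n. \<Sum>b\<le>n. (\<xi>$1) ^ a * (\<xi>$2) ^ b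
                      * (\<Sum>c\<le>n. (if c = 0 then 0 else k a b (c - 1)) * (\<xi>$3) ^ c))"
    by (intro sum.cong refl arg_cong2[where f = "(*)"] sum_atMost_mult_shift) (simp add: assms)
  also have "\<dots> = poly3 n (mult_z k) \<xi>"
    unfolding poly3_def mult_z_def by (simp add: sum_distrib_left sum_distrib_right mult_ac)
  finally show ?thesis by simp
qed

lemma poly3_LN:
  assumes "homog n k"
  shows "poly3 n (LN k) \<xi> = \<xi>$2 * poly3 n (Dx k) \<xi> + \<xi>$3 * poly3 n (Dy k) \<xi>"
proof -
  have "Dx k a n c = 0" "Dy k a b n = 0" for a b c
    using homog_D[OF assms, of "Suc a" n c] homog_D[OF assms, of a "Suc b" n]
    by (auto simp: Dx_def Dy_def)
  then show ?thesis
    unfolding LN_def poly3_add by (simp add: poly3_mult_y poly3_mult_z)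
qed

lemma poly3_eq_0_coeff:
  assumes "\<And>\<xi>. poly3 n k \<xi> = 0" "a \<le> n" "b \<le> n" "c \<le> n"
  shows "k a b c = 0"
proof -
  define C where "C a b z = (\<Sum>c\<le>n. k a b c * z ^ c)" for a b and z :: real
  define B where "B a y z = (\<Sum>b\<le>n. C a b z * y ^ b)" for a and y z :: real
  have in_x: "\<forall>x. (\<Sum>a\<le>n. B a y z * x ^ a) = 0" for y z
  proof
    fix x
    show "(\<Sum>a\<le>n. B a y z * x ^ a) = 0"
      using assms(1)[of "vector [x, y, z]"]
      unfolding poly3_def B_def C_def by (simp add: sum_distrib_left sum_distrib_right mult_ac)
  qed
  have "B a y z = 0" for y z
    using polyfun_eq_0[THEN iffD1, OF in_x] assms(2) by blast
  then have in_y: "\<forall>y. (\<Sum>b\<le>n. C a b z * y ^ b) = 0" for z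
    unfolding B_def by blast
  have "C a b z = 0" for z
    using polyfun_eq_0[THEN iffD1, OF in_y] assms(3) by blast
  then have in_z: "\<forall>z. (\<Sum>c\<le>n. k a b c * z ^ c) = 0"
    unfolding C_def by blast
  show ?thesis
    using polyfun_eq_0[THEN iffD1, OF in_z] assms(4) by blast
qed

lemma homog_poly3_eq_0:
  assumes "homog m k" "m \<le> n" "\<And>\<xi>. poly3 n k \<xi> = 0"
  shows "k = 0"
proof (intro ext)
  fix a b c
  show "k a b c = 0 a b c"
  proof (cases "k a b c = 0")
    case False
    then have "a + b + c = m" by (rule homog_D[OF assms(1)])
    then show ?thesis using poly3_eq_0_coeff[OF assms(3), of a b c] assms(2) by simp
  qed simp
qed

lemma homog_poly3_inj:
  assumes "homog d k" "homog d m" "\<And>\<xi>. poly3 d k \<xi> = poly3 d m \<xi>"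
  shows "k = m"
  using homog_poly3_eq_0[OF homog_diff[OF assms(1,2)] order_refl] assms(3)
  by (simp add: poly3_diff)

lemma sum_atMost_if_le: "(\<Sum>b\<le>(d::nat). if b \<le> m then F b else (0::real)) = sum F {..min d m}"
proof -
  have "(\<Sum>b\<le>d. if b \<le> m then F b else (0::real)) = sum F {b \<in> {..d}. b \<le> m}"
    by (rule sum.inter_filter[symmetric]) simp
  also have "{b \<in> {..d}. b \<le> m} = {..min d m}" by auto
  finally show ?thesis .
qed

lemma poly3_homog:
  assumes "homog d k"
  shows "poly3 d k \<xi>
    = (\<Sum>i\<le>d. \<Sum>j\<le>d - i. k i j (d - i - j) * (\<xi>$1) ^ i * (\<xi>$2) ^ j * (\<xi>$3) ^ (d - i - j))"
proof -
  let ?m = "\<lambda>a b c. k a b c * ((\<xi>$1) ^ a * (\<xi>$2) ^ b * (\<xi>$3) ^ c)"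
  have "(\<Sum>c\<le>d. ?m a b c) = (if b \<le> d - a then ?m a b (d - a - b) else 0)" for a b
  proof -
    have "(\<Sum>c\<le>d. ?m a b c) = (\<Sum>c\<le>d. if c = d - a - b then (if b \<le> d - a then ?m a b c else 0) else 0)"
      using homog_D[OF assms, of a b] by (intro sum.cong refl) fastforce
    then show ?thesis by simp
  qed
  then have "poly3 d k \<xi> = (\<Sum>a\<le>d. \<Sum>b\<le>d. if b \<le> d - a then ?m a b (d - a - b) else 0)"
    unfolding poly3_def by simp
  also have "\<dots> = (\<Sum>a\<le>d. \<Sum>b\<le>d - a. ?m a b (d - a - b))"
    by (simp add: sum_atMost_if_le)
  finally show ?thesis by (simp add: mult_ac)
qed

lemma hom_poly3_poly3: "homog d k \<Longrightarrow> hom_poly3 d (poly3 d k)"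
  unfolding hom_poly3_def by (rule exI[of _ "\<lambda>i j. k i j (d - i - j)"]) (simp add: poly3_homog)

lemma hom_poly3_obtain:
  assumes "hom_poly3 d p"
  obtains k where "homog d k" "p = poly3 d k"
proof -
  obtain c where c: "\<And>\<xi>. p \<xi> = (\<Sum>i\<le>d. \<Sum>j\<le>d - i. c i j * (\<xi>$1) ^ i * (\<xi>$2) ^ j * (\<xi>$3) ^ (d - i - j))"
    using assms unfolding hom_poly3_def by blast
  define k where "k = (\<lambda>a b c'. if a + b + c' = d then c a b else 0)"
  have hk: "homog d k" unfolding homog_def k_def by auto
  have "p \<xi> = poly3 d k \<xi>" for \<xi>
    unfolding c poly3_homog[OF hk] by (intro sum.cong refl) (auto simp: k_def)
  then show ?thesis using hk that by blast
qed

section \<open>Polynomial vector fields\<close>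

definition field_of :: "nat \<Rightarrow> coeffs \<Rightarrow> coeffs \<Rightarrow> coeffs \<Rightarrow> real^3 \<Rightarrow> real^3" where
  "field_of d k1 k2 k3 \<xi> = poly3 d k1 \<xi> *\<^sub>R axis 1 1 + poly3 d k2 \<xi> *\<^sub>R axis 2 1 + poly3 d k3 \<xi> *\<^sub>R axis 3 1"

lemma field_of_nth [simp]:
  "field_of d k1 k2 k3 \<xi> $ 1 = poly3 d k1 \<xi>"
  "field_of d k1 k2 k3 \<xi> $ 2 = poly3 d k2 \<xi>"
  "field_of d k1 k2 k3 \<xi> $ 3 = poly3 d k3 \<xi>"
  by (simp_all add: field_of_def axis_def)

lemma field_of_eq_iff:
  "field_of d k1 k2 k3 = field_of d m1 m2 m3 \<longleftrightarrow>
     (\<forall>\<xi>. poly3 d k1 \<xi> = poly3 d m1 \<xi> \<and> poly3 d k2 \<xi> = poly3 d m2 \<xi> \<and> poly3 d k3 \<xi> = poly3 d m3 \<xi>)"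
  by (auto simp: fun_eq_iff vec_eq_iff forall_3)

lemma field_of_add: "(\<lambda>\<xi>. field_of d k1 k2 k3 \<xi> + field_of d m1 m2 m3 \<xi>) = field_of d (k1 + m1) (k2 + m2) (k3 + m3)"
  by (simp add: fun_eq_iff vec_eq_iff forall_3 poly3_add)

lemma field_of_zero: "field_of d 0 0 0 = (\<lambda>\<xi>. 0)"
  by (simp add: fun_eq_iff vec_eq_iff forall_3)

lemma field_of_has_derivative:
  assumes "homog d k1" "homog d k2" "homog d k3"
  shows "(field_of d k1 k2 k3 has_derivative (\<lambda>v. poly3_deriv d k1 \<xi> v *\<^sub>R axis 1 1
           + poly3_deriv d k2 \<xi> v *\<^sub>R axis 2 1 + poly3_deriv d k3 \<xi> v *\<^sub>R axis 3 1)) (at \<xi>)"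
  unfolding field_of_def[abs_def]
  by (intro has_derivative_add has_derivative_scaleR_left poly3_has_derivative assms)

lemma Nmat_mult: "Nmat *v x = vector [x$2, x$3, 0]"
  unfolding Nmat_def by (simp add: vec_eq_iff forall_3 matrix_vector_mult_def sum_3)

lemma poly3_deriv_Nmat: "homog d k \<Longrightarrow> poly3_deriv d k \<xi> (Nmat *v \<xi>) = poly3 d (LN k) \<xi>"
  by (simp add: poly3_deriv_def Nmat_mult poly3_LN)

lemma adN_field_of:
  assumes "homog d k1" "homog d k2" "homog d k3"
  shows "adN (field_of d k1 k2 k3) = field_of d (LN k1 - k2) (LN k2 - k3) (LN k3)"
proof
  fix \<xi>
  show "adN (field_of d k1 k2 k3) \<xi> = field_of d (LN k1 - k2) (LN k2 - k3) (LN k3) \<xi>"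
    unfolding adN_def frechet_derivative_at[OF field_of_has_derivative[OF assms], symmetric]
    by (simp add: vec_eq_iff forall_3 axis_def poly3_diff poly3_deriv_Nmat assms
        Nmat_mult[of "field_of d k1 k2 k3 \<xi>"])
qed

lemma deriv_along_line:
  fixes f :: "'a::real_normed_vector \<Rightarrow> real"
  assumes "(f has_derivative D) (at \<xi>)"
  shows "deriv (\<lambda>t. f (\<xi> + t *\<^sub>R e)) 0 = D e"
proof -
  have line: "((\<lambda>t. \<xi> + t *\<^sub>R e) has_derivative (\<lambda>t. t *\<^sub>R e)) (at 0)"
    by (auto intro!: derivative_eq_intros)
  have "((\<lambda>t. f (\<xi> + t *\<^sub>R e)) has_derivative (\<lambda>t. D (t *\<^sub>R e))) (at 0)"
    using has_derivative_compose[OF line, of f D] assms by simp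
  moreover have "(\<lambda>t. D (t *\<^sub>R e)) = (*) (D e)"
    using linear_scale[OF has_derivative_linear[OF assms]] by (auto simp: mult.commute)
  ultimately show ?thesis
    by (intro DERIV_imp_deriv) (simp add: has_field_derivative_def)
qed

lemma divergence_field_of:
  assumes "homog d k1" "homog d k2" "homog d k3"
  shows "divergence (field_of d k1 k2 k3) \<xi> = poly3 d (Dx k1 + Dy k2 + Dz k3) \<xi>"
proof -
  have "deriv (\<lambda>t. poly3 d k (\<xi> + t *\<^sub>R axis j 1)) 0 = poly3_deriv d k \<xi> (axis j 1)" if "homog d k" for k j
    by (rule deriv_along_line[OF poly3_has_derivative[OF that]])
  then show ?thesis
    using assms by (simp add: divergence_def sum_3 poly3_deriv_def axis_def poly3_add)
qed

lemma field_of_in_F3: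
  assumes "homog d k1" "homog d k2" "homog d k3"
  shows "field_of d k1 k2 k3 \<in> F3 d"
  unfolding F3_def
proof (intro CollectI allI)
  fix j :: 3
  have "(\<lambda>\<xi>. field_of d k1 k2 k3 \<xi> $ j) \<in> {poly3 d k1, poly3 d k2, poly3 d k3}"
    using exhaust_3[of j] by (auto simp: fun_eq_iff)
  then show "hom_poly3 d (\<lambda>\<xi>. field_of d k1 k2 k3 \<xi> $ j)"
    using assms by (auto intro: hom_poly3_poly3)
qed

lemma F3_obtain:
  assumes "v \<in> F3 d"
  obtains k1 k2 k3 where "homog d k1" "homog d k2" "homog d k3" "v = field_of d k1 k2 k3"
proof -
  have "hom_poly3 d (\<lambda>\<xi>. v \<xi> $ j)" for j
    using assms unfolding F3_def by blast
  then have "\<forall>j. \<exists>k. homog d k \<and> (\<lambda>\<xi>. v \<xi> $ j) = poly3 d k"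
    by (auto elim: hom_poly3_obtain)
  from choice[OF this] obtain \<kappa> where \<kappa>: "\<forall>j. homog d (\<kappa> j) \<and> (\<lambda>\<xi>. v \<xi> $ j) = poly3 d (\<kappa> j)"
    by (elim exE)
  then have "v = field_of d (\<kappa> 1) (\<kappa> 2) (\<kappa> 3)"
    by (simp add: fun_eq_iff vec_eq_iff forall_3)
  with \<kappa> that show ?thesis by blast
qed

lemma field_of_in_V3_iff:
  assumes "homog d k1" "homog d k2" "homog d k3"
  shows "field_of d k1 k2 k3 \<in> V3 d \<longleftrightarrow> Dx k1 + Dy k2 + Dz k3 = 0"
proof -
  have "homog (d - 1) (Dx k1 + Dy k2 + Dz k3)"
    using assms by (intro homog_add homog_Dx homog_Dy homog_Dz)
  then have "(\<forall>\<xi>. poly3 d (Dx k1 + Dy k2 + Dz k3) \<xi> = 0) \<longleftrightarrow> Dx k1 + Dy k2 + Dz k3 = 0"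
    using homog_poly3_eq_0[of "d - 1" _ d] by auto
  then show ?thesis
    unfolding V3_def using field_of_in_F3[OF assms] divergence_field_of[OF assms] by auto
qed

lemma field_of_inj:
  assumes "homog d k1" "homog d k2" "homog d k3" "homog d m1" "homog d m2" "homog d m3"
    and "field_of d k1 k2 k3 = field_of d m1 m2 m3"
  shows "k1 = m1 \<and> k2 = m2 \<and> k3 = m3"
proof -
  have "\<And>\<xi>. poly3 d k1 \<xi> = poly3 d m1 \<xi>" "\<And>\<xi>. poly3 d k2 \<xi> = poly3 d m2 \<xi>"
    "\<And>\<xi>. poly3 d k3 \<xi> = poly3 d m3 \<xi>"
    using assms(7) unfolding field_of_eq_iff by blast+
  then show ?thesis
    using homog_poly3_inj assms(1-6) by blast
qed

lemma poly3_z_free: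
  assumes "homog d p" "z_free p"
  shows "poly3 d p \<xi> = (\<Sum>i\<le>d. p i (d - i) 0 * (\<xi>$1) ^ i * (\<xi>$2) ^ (d - i))"
  unfolding poly3_homog[OF assms(1)]
proof (intro sum.cong refl)
  fix i
  have "(\<Sum>j\<le>d - i. p i j (d - i - j) * (\<xi>$1) ^ i * (\<xi>$2) ^ j * (\<xi>$3) ^ (d - i - j))
      = (\<Sum>j\<le>d - i. if j = d - i then p i j 0 * (\<xi>$1) ^ i * (\<xi>$2) ^ j else 0)"
    using assms(2) by (intro sum.cong refl) (auto simp: z_free_def)
  then show "(\<Sum>j\<le>d - i. p i j (d - i - j) * (\<xi>$1) ^ i * (\<xi>$2) ^ j * (\<xi>$3) ^ (d - i - j))
      = p i (d - i) 0 * (\<xi>$1) ^ i * (\<xi>$2) ^ (d - i)"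
    by simp
qed

lemma Wd_iff: "w \<in> Wd d \<longleftrightarrow> (\<exists>p. homog d p \<and> z_free p \<and> w = field_of d 0 0 p)"
proof
  assume "w \<in> Wd d"
  then obtain q c where w: "w = (\<lambda>\<xi>. q (\<xi>$1) (\<xi>$2) *\<^sub>R axis 3 1)"
    and c: "\<And>x y. q x y = (\<Sum>i\<le>d. c i * x ^ i * y ^ (d - i))"
    unfolding Wd_def P2_def by blast
  define p :: coeffs where "p = (\<lambda>a b c'. if c' = 0 \<and> a + b = d then c a else 0)"
  have "homog d p" "z_free p"
    by (auto simp: homog_def z_free_def p_def)
  moreover have "w = field_of d 0 0 p"
    unfolding w c field_of_def poly3_z_free[OF \<open>homog d p\<close> \<open>z_free p\<close>]
    by (auto simp: p_def intro!: sum.cong)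
  ultimately show "\<exists>p. homog d p \<and> z_free p \<and> w = field_of d 0 0 p" by blast
next
  assume "\<exists>p. homog d p \<and> z_free p \<and> w = field_of d 0 0 p"
  then obtain p where p: "homog d p" "z_free p" "w = field_of d 0 0 p" by blast
  define q where "q x y = (\<Sum>i\<le>d. p i (d - i) 0 * x ^ i * y ^ (d - i))" for x y :: real
  have "q \<in> P2 d" unfolding P2_def q_def by auto
  moreover have "w = (\<lambda>\<xi>. q (\<xi>$1) (\<xi>$2) *\<^sub>R axis 3 1)"
    unfolding p(3) field_of_def poly3_z_free[OF p(1,2)] q_def by simp
  ultimately show "w \<in> Wd d" unfolding Wd_def by blast
qed

section \<open>The complement of the range of \<open>ad\<^sub>N\<close>\<close>

lemma Dz_divergence_free:
  assumes "Dx k1 + Dy k2 + Dz k3 = 0"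
  shows "Dz (LN (LN k1) + LN k2 + k3) = LN (LN (Dz k1) + Dy k1 + Dy k1 + Dz k2)"
proof -
  have k3: "Dz k3 = - Dx k1 - Dy k2" using assms by (simp add: algebra_simps eq_neg_iff_add_eq_0)
  show ?thesis unfolding Dz_add Dz_LN Dy_LN LN_add k3 by (simp add: algebra_simps)
qed

lemma divergence_free_decomposition:
  assumes "homog d k1" "homog d k2" "homog d k3" "Dx k1 + Dy k2 + Dz k3 = 0"
  obtains h1 h2 h3 p where "homog d h1" "homog d h2" "homog d h3" "homog d p" "z_free p"
    "LN h1 - h2 = k1" "LN h2 - h3 = k2" "LN h3 = k3 - p"
proof -
  define u where "u = LN (LN k1) + LN k2 + k3"
  have "homog d u" unfolding u_def using assms(1-3) by (intro homog_add homog_LN)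
  moreover have "Dz u \<in> range LN" unfolding u_def Dz_divergence_free[OF assms(4)] by blast
  ultimately obtain p where p: "homog d p" "z_free p" "u - p \<in> L3_image d"
    using L3_decomposition by blast
  then obtain f where f: "homog d f" "L3 f = u - p"
    unfolding mem_L3_image_iff by blast
  define h2 where "h2 = LN f - k1"
  define h3 where "h3 = LN h2 - k2"
  have "homog d h2"
    unfolding h2_def using f(1) assms(1) by (intro homog_diff homog_LN)
  moreover have "homog d h3"
    unfolding h3_def using \<open>homog d h2\<close> assms(2) by (intro homog_diff homog_LN)
  moreover have "LN h3 = k3 - p"
    unfolding h3_def h2_def LN_diff f(2) u_def by (simp add: algebra_simps)
  ultimately show ?thesis
    using that f(1) p(1,2) by (simp add: h2_def h3_def)
qed

lemma Wd_subset_V3: "Wd d \<subseteq> V3 d"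
proof
  fix w
  assume "w \<in> Wd d"
  then obtain p where p: "homog d p" "z_free p" "w = field_of d 0 0 p"
    unfolding Wd_iff by blast
  then show "w \<in> V3 d"
    by (simp add: field_of_in_V3_iff Dz_z_free)
qed

lemma range_adN_inter_Wd: "(adN ` F3 d \<inter> V3 d) \<inter> Wd d = {(\<lambda>\<xi>. 0)}"
proof
  show "(adN ` F3 d \<inter> V3 d) \<inter> Wd d \<subseteq> {(\<lambda>\<xi>. 0)}"
  proof
    fix r
    assume r: "r \<in> (adN ` F3 d \<inter> V3 d) \<inter> Wd d"
    then obtain h where "h \<in> F3 d" "r = adN h" by blast
    then obtain k1 k2 k3 where k: "homog d k1" "homog d k2" "homog d k3"
      and r_eq: "r = field_of d (LN k1 - k2) (LN k2 - k3) (LN k3)"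
      by (metis F3_obtain adN_field_of)
    have "r \<in> Wd d" using r by blast
    then obtain p where p: "homog d p" "z_free p" "r = field_of d 0 0 p"
      unfolding Wd_iff by blast
    have "LN k1 - k2 = 0 \<and> LN k2 - k3 = 0 \<and> LN k3 = p"
      using k p(1) r_eq p(3) by (intro field_of_inj) (auto intro: homog_diff homog_LN)
    then have "L3 k1 = p" by simp
    then have "p = 0" using z_free_L3_eq_zero p(2) by blast
    then show "r \<in> {(\<lambda>\<xi>. 0)}" using p(3) field_of_zero by simp
  qed
next
  have "(\<lambda>\<xi>. 0) = adN (field_of d 0 0 0)"
    unfolding adN_field_of[OF homog_zero homog_zero homog_zero] by (simp add: field_of_zero)
  then have "(\<lambda>\<xi>. 0) \<in> adN ` F3 d"
    using field_of_in_F3[OF homog_zero homog_zero homog_zero] by blast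
  moreover have "(\<lambda>\<xi>. 0) \<in> Wd d"
    unfolding Wd_iff by (intro exI[of _ 0]) (simp add: field_of_zero z_free_def)
  ultimately show "{(\<lambda>\<xi>. 0)} \<subseteq> (adN ` F3 d \<inter> V3 d) \<inter> Wd d"
    using Wd_subset_V3 by blast
qed

lemma V3_eq_range_adN_plus_Wd:
  "V3 d = {(\<lambda>\<xi>. r \<xi> + w \<xi>) | r w. r \<in> adN ` F3 d \<inter> V3 d \<and> w \<in> Wd d}"
proof
  show "V3 d \<subseteq> {(\<lambda>\<xi>. r \<xi> + w \<xi>) | r w. r \<in> adN ` F3 d \<inter> V3 d \<and> w \<in> Wd d}"
  proof
    fix v
    assume v: "v \<in> V3 d"
    then obtain k1 k2 k3 where k: "homog d k1" "homog d k2" "homog d k3" "v = field_of d k1 k2 k3"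
      unfolding V3_def using F3_obtain by blast
    then have div: "Dx k1 + Dy k2 + Dz k3 = 0"
      using v field_of_in_V3_iff by blast
    obtain h1 h2 h3 p where h: "homog d h1" "homog d h2" "homog d h3" and p: "homog d p" "z_free p"
      and eqs: "LN h1 - h2 = k1" "LN h2 - h3 = k2" "LN h3 = k3 - p"
      using divergence_free_decomposition[OF k(1-3) div] .
    define r where "r = adN (field_of d h1 h2 h3)"
    have r_eq: "r = field_of d k1 k2 (k3 - p)"
      unfolding r_def adN_field_of[OF h] eqs ..
    have "r \<in> adN ` F3 d"
      unfolding r_def using field_of_in_F3[OF h] by blast
    moreover have "r \<in> V3 d"
      unfolding r_eq using k(1-3) p div
      by (simp add: field_of_in_V3_iff homog_diff Dz_diff Dz_z_free)
    moreover have "field_of d 0 0 p \<in> Wd d"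
      unfolding Wd_iff using p by blast
    moreover have "v = (\<lambda>\<xi>. r \<xi> + field_of d 0 0 p \<xi>)"
      unfolding r_eq field_of_add k(4) by simp
    ultimately show "v \<in> {(\<lambda>\<xi>. r \<xi> + w \<xi>) | r w. r \<in> adN ` F3 d \<inter> V3 d \<and> w \<in> Wd d}"
      by blast
  qed
next
  show "{(\<lambda>\<xi>. r \<xi> + w \<xi>) | r w. r \<in> adN ` F3 d \<inter> V3 d \<and> w \<in> Wd d} \<subseteq> V3 d"
  proof
    fix s
    assume "s \<in> {(\<lambda>\<xi>. r \<xi> + w \<xi>) | r w. r \<in> adN ` F3 d \<inter> V3 d \<and> w \<in> Wd d}"
    then obtain r w where s: "s = (\<lambda>\<xi>. r \<xi> + w \<xi>)" and r: "r \<in> V3 d" and w: "w \<in> Wd d"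
      by blast
    obtain k1 k2 k3 where k: "homog d k1" "homog d k2" "homog d k3" "r = field_of d k1 k2 k3"
      using r unfolding V3_def using F3_obtain by blast
    obtain p where p: "homog d p" "z_free p" "w = field_of d 0 0 p"
      using w unfolding Wd_iff by blast
    have "Dx k1 + Dy k2 + Dz k3 = 0"
      using r k field_of_in_V3_iff by blast
    then show "s \<in> V3 d"
      unfolding s k(4) p(3) field_of_add
      using k(1-3) p by (simp add: field_of_in_V3_iff homog_add Dz_add Dz_z_free)
  qed
qed

theorem lemma10:
  fixes d :: nat
  assumes "d \<ge> 1"
  shows "Wd d \<subseteq> V3 d
    \<and> (adN ` F3 d \<inter> V3 d) \<inter> Wd d = {(\<lambda>\<xi>. 0)}
    \<and> V3 d = {(\<lambda>\<xi>. r \<xi> + w \<xi>) | r w. r \<in> adN ` F3 d \<inter> V3 d \<and> w \<in> Wd d}"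
  using Wd_subset_V3 range_adN_inter_Wd V3_eq_range_adN_plus_Wd by blast

end
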